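(* For every triangle $T$ (a set of three non-collinear points in some $\mathbb{R}^k$) there is $p_0(T)$ such that $T$ is Euclidean sub-$p$-toral for every prime $p\ge p_0(T)$.
   Context: A $p$-torus is a group isomorphic to $(\mathbb{Z}_p)^\alpha$ for some $\alpha\ge1$. A set $X\subset\mathbb{R}^k$ is Euclidean sub-$p$-toral if there exist $n\ge k$, a $p$-torus $G$ and an action of $G$ on $\mathbb{R}^n$ by isometries such that $X$ (viewed in $\mathbb{R}^n$ via the standard inclusion $\mathbb{R}^k\subset\mathbb{R}^n$) is contained in a single $G$-orbit. *)

theory Defs
  imports "HOL-Analysis.Analysis" "HOL-Algebra.Group_Action" "HOL-Algebra.Elementary_Groups"
          "HOL-Algebra.Product_Groups"
begin

text \<open>Points of R^n are represented as functions nat => real vanishing from index n on;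
  thus the standard inclusion R^k into R^n (k <= n) is the identity.\<close>

definition Rn :: "nat \<Rightarrow> (nat \<Rightarrow> real) set" where
  "Rn n = {x. \<forall>i\<ge>n. x i = 0}"

definition edist :: "nat \<Rightarrow> (nat \<Rightarrow> real) \<Rightarrow> (nat \<Rightarrow> real) \<Rightarrow> real" where
  "edist n x y = sqrt (\<Sum>i<n. (x i - y i)^2)"

text \<open>Collinearity, exactly as the library notion collinear (HOL-Analysis), written componentwise.\<close>
definition collinear_pts :: "(nat \<Rightarrow> real) set \<Rightarrow> bool" where
  "collinear_pts S \<longleftrightarrow> (\<exists>u. \<forall>x\<in>S. \<forall>y\<in>S. \<exists>c. \<forall>i. x i - y i = c * u i)"

definition p_torus :: "('a, 'b) monoid_scheme \<Rightarrow> nat \<Rightarrow> bool" where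
  "p_torus G p \<longleftrightarrow> group G \<and>
     (\<exists>\<alpha>::nat. \<alpha> \<ge> 1 \<and> G \<cong> product_group {..<\<alpha>} (\<lambda>_. integer_mod_group p))"

definition isometric_action :: "('a, 'b) monoid_scheme \<Rightarrow> nat \<Rightarrow> ('a \<Rightarrow> (nat \<Rightarrow> real) \<Rightarrow> (nat \<Rightarrow> real)) \<Rightarrow> bool" where
  "isometric_action G n \<phi> \<longleftrightarrow> group_action G (Rn n) \<phi> \<and>
     (\<forall>g\<in>carrier G. \<forall>x\<in>Rn n. \<forall>y\<in>Rn n. edist n (\<phi> g x) (\<phi> g y) = edist n x y)"

text \<open>Euclidean sub-p-toral sets of R^k. The group is taken with carrier type nat => int;
  since any p-torus is finite, every p-torus is isomorphic to such a group, so this loses nothing.\<close>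
definition sub_p_toral :: "nat \<Rightarrow> nat \<Rightarrow> (nat \<Rightarrow> real) set \<Rightarrow> bool" where
  "sub_p_toral p k X \<longleftrightarrow>
     (\<exists>n\<ge>k. \<exists>(G :: (nat \<Rightarrow> int) monoid) \<phi>. p_torus G p \<and> isometric_action G n \<phi> \<and>
        (\<exists>x\<in>Rn n. X \<subseteq> orbit G \<phi> x))"

end

theory Submission
  imports Defs "HOL-Library.Function_Algebras" "HOL-Real_Asymp.Real_Asymp"
begin

(* The group (Z_p)^3 acts isometrically on R^(k+6) by rotating three coordinate planes through
   multiples of 2 pi / p. For a point x0 with radii r0, r1, r2 in these planes, the triangle formed
   by x0 and its images under (1, 0, e1) and (0, 1, e2) has edge Gram matrix at x0 given by the
   chord products chord_dot. Triangles with equal Gram matrices are congruent, and conjugating the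
   action by the congruence keeps it isometric, so it suffices to match the Gram matrix (A, g; g, B)
   of T. Since chord_dot (a t) (b t) ~ a b t^2 as t -> 0, choose e1 = k and e2 = +-m with k / m
   strictly between |g| / B and A / |g| (possible by the strict Cauchy-Schwarz inequality
   g^2 < A B, i.e. non-collinearity): the third plane then produces g exactly, leaving positive
   diagonal deficits for the first two planes once p is large. *)

lemma Rn_diff: "x \<in> Rn n \<Longrightarrow> y \<in> Rn n \<Longrightarrow> x - y \<in> Rn n"
  and Rn_add: "x \<in> Rn n \<Longrightarrow> y \<in> Rn n \<Longrightarrow> x + y \<in> Rn n"
  and Rn_uminus: "x \<in> Rn n \<Longrightarrow> - x \<in> Rn n"
  and Rn_mono: "x \<in> Rn k \<Longrightarrow> k \<le> n \<Longrightarrow> x \<in> Rn n"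
  unfolding Rn_def by auto

definition dot :: "nat \<Rightarrow> (nat \<Rightarrow> real) \<Rightarrow> (nat \<Rightarrow> real) \<Rightarrow> real" where
  "dot n x y = (\<Sum>i<n. x i * y i)"

lemma dot_commute: "dot n x y = dot n y x"
  unfolding dot_def by (simp add: mult.commute)

lemma dot_diff_left: "dot n (x - y) z = dot n x z - dot n y z"
  and dot_diff_right: "dot n z (x - y) = dot n z x - dot n z y"
  and dot_scale_left: "dot n (\<lambda>i. c * x i) z = c * dot n x z"
  and dot_scale_right: "dot n z (\<lambda>i. c * x i) = c * dot n z x"
  unfolding dot_def by (simp_all add: algebra_simps sum_subtractf sum_distrib_left)

lemma dot_self_nonneg: "0 \<le> dot n x x"
  unfolding dot_def by (simp add: sum_nonneg)

lemma dot_self_eq_0: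
  assumes "x \<in> Rn n"
  shows "dot n x x = 0 \<longleftrightarrow> x = 0"
proof
  assume "dot n x x = 0"
  then have "\<forall>i<n. x i = 0"
    unfolding dot_def by (subst (asm) sum_nonneg_eq_0_iff) auto
  with assms show "x = 0"
    unfolding Rn_def by (auto simp: fun_eq_iff not_less[symmetric])
qed (simp add: dot_def)

lemma edist_eq_dot: "edist n x y = sqrt (dot n (x - y) (x - y))"
  unfolding edist_def dot_def by (simp add: power2_eq_square)

lemma collinear_ptsI:
  assumes "\<And>i. b i = a i + s * u i" and "\<And>i. c i = a i + t * u i"
  shows "collinear_pts {a, b, c}"
proof -
  have "\<exists>r. \<forall>i. x i = a i + r * u i" if "x \<in> {a, b, c}" for x
    using that assms by (auto intro: exI[of _ 0])
  then show ?thesis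
    unfolding collinear_pts_def
    by (metis (no_types, opaque_lifting) add_diff_cancel_left left_diff_distrib)
qed

lemma dot_square_less_if_not_collinear:
  assumes "a \<in> Rn n" "b \<in> Rn n" "c \<in> Rn n" and "\<not> collinear_pts {a, b, c}"
  shows "(dot n (b - a) (c - a))\<^sup>2 < dot n (b - a) (b - a) * dot n (c - a) (c - a)"
proof (rule ccontr)
  define u v where "u = b - a" and "v = c - a"
  have u: "u \<in> Rn n" and v: "v \<in> Rn n"
    using assms by (simp_all add: u_def v_def Rn_diff)
  assume "\<not> ?thesis"
  then have le: "dot n u u * dot n v v \<le> (dot n u v)\<^sup>2"
    by (simp add: u_def v_def)
  have "collinear_pts {a, b, c}"
  proof (cases "dot n u u = 0")
    case True
    then have "u = 0" using u dot_self_eq_0 by blast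
    then show ?thesis
      by (intro collinear_ptsI[where s = 0 and t = 1 and u = v]) (simp_all add: u_def v_def fun_eq_iff)
  next
    case False
    then have pos: "0 < dot n u u" using dot_self_nonneg[of n u] by linarith
    define w where "w = (\<lambda>i. dot n u u * v i) - (\<lambda>i. dot n u v * u i)"
    have w: "w \<in> Rn n"
      using u v by (simp add: w_def Rn_def)
    have "dot n w w = dot n u u * (dot n u u * dot n v v - (dot n u v)\<^sup>2)"
      unfolding w_def dot_diff_left dot_diff_right dot_scale_left dot_scale_right
      by (simp add: dot_commute power2_eq_square algebra_simps)
    also have "\<dots> \<le> 0"
      using pos le by (simp add: mult_nonneg_nonpos)
    finally have "w = 0"
      using dot_self_nonneg[of n w] dot_self_eq_0[OF w] by linarith
    then have "c i = a i + dot n u v / dot n u u * u i" for i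
      using pos by (auto simp: w_def v_def fun_eq_iff field_simps)
    moreover have "b i = a i + 1 * u i" for i
      by (simp add: u_def)
    ultimately show ?thesis
      by (rule collinear_ptsI[rotated])
  qed
  with assms(4) show False ..
qed

(* For w = 0 the division by zero makes this the identity. *)
definition reflect :: "nat \<Rightarrow> (nat \<Rightarrow> real) \<Rightarrow> (nat \<Rightarrow> real) \<Rightarrow> (nat \<Rightarrow> real)" where
  "reflect n w z = z - (\<lambda>i. 2 * dot n z w / dot n w w * w i)"

lemma reflect_Rn: "w \<in> Rn n \<Longrightarrow> z \<in> Rn n \<Longrightarrow> reflect n w z \<in> Rn n"
  unfolding reflect_def Rn_def by auto

lemma dot_reflect: "dot n (reflect n w x) (reflect n w y) = dot n x y"
  unfolding reflect_def dot_diff_left dot_diff_right dot_scale_left dot_scale_right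
  by (cases "dot n w w = 0") (auto simp: field_simps dot_commute)

lemma reflect_reflect: "reflect n w (reflect n w x) = x"
proof (cases "dot n w w = 0")
  case False
  then have "dot n (reflect n w x) w = - dot n x w"
    unfolding reflect_def dot_diff_left dot_scale_left by (simp add: field_simps)
  then show ?thesis
    unfolding reflect_def[of n w "reflect n w x"] by (simp add: reflect_def fun_eq_iff)
qed (simp add: reflect_def zero_fun_def)

lemma reflect_diff: "reflect n w (x - y) = reflect n w x - reflect n w y"
  unfolding reflect_def dot_diff_left by (simp add: fun_eq_iff diff_divide_distrib algebra_simps)

lemma reflect_orthogonal: "dot n z w = 0 \<Longrightarrow> reflect n w z = z"
  unfolding reflect_def by (simp add: zero_fun_def)

lemma reflect_swap:
  assumes "x \<in> Rn n" "y \<in> Rn n" and "dot n x x = dot n y y"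
  shows "reflect n (x - y) x = y"
proof (cases "x = y")
  case False
  then have "dot n (x - y) (x - y) \<noteq> 0"
    using assms(1,2) by (simp add: dot_self_eq_0 Rn_diff)
  moreover have "dot n (x - y) (x - y) = 2 * dot n x (x - y)"
    using assms(3) by (simp add: dot_diff_left dot_diff_right dot_commute)
  ultimately show ?thesis
    by (simp add: reflect_def fun_eq_iff)
qed (simp add: reflect_def zero_fun_def)

definition isometry_Rn :: "nat \<Rightarrow> ((nat \<Rightarrow> real) \<Rightarrow> (nat \<Rightarrow> real)) \<Rightarrow> bool" where
  "isometry_Rn n f \<longleftrightarrow> bij_betw f (Rn n) (Rn n) \<and>
     (\<forall>x\<in>Rn n. \<forall>y\<in>Rn n. edist n (f x) (f y) = edist n x y)"

lemma isometry_Rn_comp: "isometry_Rn n f \<Longrightarrow> isometry_Rn n g \<Longrightarrow> isometry_Rn n (f \<circ> g)"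
  unfolding isometry_Rn_def by (auto intro: bij_betw_trans simp: bij_betw_apply)

lemma isometry_Rn_translate:
  assumes "v \<in> Rn n"
  shows "isometry_Rn n (\<lambda>x. x + v)"
  unfolding isometry_Rn_def
proof
  show "bij_betw (\<lambda>x. x + v) (Rn n) (Rn n)"
    by (rule bij_betw_byWitness[where f' = "\<lambda>x. x - v"])
      (use assms in \<open>auto simp: Rn_diff Rn_add\<close>)
qed (simp add: edist_def)

lemma isometry_Rn_reflect:
  assumes "w \<in> Rn n"
  shows "isometry_Rn n (reflect n w)"
  unfolding isometry_Rn_def
proof
  show "bij_betw (reflect n w) (Rn n) (Rn n)"
    by (rule bij_betw_byWitness[where f' = "reflect n w"])
      (use assms in \<open>auto simp: reflect_reflect reflect_Rn\<close>)
qed (simp add: edist_eq_dot reflect_diff[symmetric] dot_reflect)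

(* One reflection moves b' - a' to b - a; a second one, in a hyperplane containing b - a,
   moves the image of c' - a' to c - a. *)
lemma congruent_triangles_isometry:
  assumes "a \<in> Rn n" "b \<in> Rn n" "c \<in> Rn n" "a' \<in> Rn n" "b' \<in> Rn n" "c' \<in> Rn n"
    and "dot n (b' - a') (b' - a') = dot n (b - a) (b - a)"
    and "dot n (c' - a') (c' - a') = dot n (c - a) (c - a)"
    and "dot n (b' - a') (c' - a') = dot n (b - a) (c - a)"
  obtains f where "isometry_Rn n f" "f a' = a" "f b' = b" "f c' = c"
proof -
  define u v u' v' where "u = b - a" and "v = c - a" and "u' = b' - a'" and "v' = c' - a'"
  have Rn: "u \<in> Rn n" "v \<in> Rn n" "u' \<in> Rn n" "v' \<in> Rn n"
    using assms(1-6) by (simp_all add: u_def v_def u'_def v'_def Rn_diff)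
  define w1 where "w1 = u' - u"
  have w1: "w1 \<in> Rn n" and H1u': "reflect n w1 u' = u"
    using Rn assms(7) by (simp_all add: w1_def u_def u'_def Rn_diff reflect_swap)
  define v'' where "v'' = reflect n w1 v'"
  have v'': "v'' \<in> Rn n" "dot n v'' v'' = dot n v v" "dot n u v'' = dot n u v"
    using Rn w1 assms(8,9) H1u' dot_reflect[of n w1 u' v']
    by (simp_all add: v''_def reflect_Rn dot_reflect u_def v_def u'_def v'_def)
  define w2 where "w2 = v'' - v"
  have w2: "w2 \<in> Rn n" and H2v'': "reflect n w2 v'' = v" and H2u: "reflect n w2 u = u"
    using Rn v'' by (simp_all add: w2_def Rn_diff reflect_swap reflect_orthogonal dot_diff_right)
  define f where "f = (\<lambda>x. x + a) \<circ> reflect n w2 \<circ> reflect n w1 \<circ> (\<lambda>x. x + - a')"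
  show ?thesis
  proof
    show "isometry_Rn n f"
      unfolding f_def using assms(1,4) w1 w2
      by (intro isometry_Rn_comp isometry_Rn_translate isometry_Rn_reflect Rn_uminus)
    have "reflect n w 0 = 0" for w
      by (simp add: reflect_def dot_def zero_fun_def)
    then show "f a' = a"
      by (simp add: f_def)
    show "f b' = b" "f c' = c"
      using H1u' H2u H2v'' by (simp_all add: f_def u_def v_def u'_def v'_def v''_def)
  qed
qed

lemma group_actionI:
  assumes G: "group G"
    and closed: "\<And>g x. g \<in> carrier G \<Longrightarrow> x \<in> E \<Longrightarrow> f g x \<in> E"
    and mult: "\<And>g h x. g \<in> carrier G \<Longrightarrow> h \<in> carrier G \<Longrightarrow> x \<in> E \<Longrightarrow>
                 f (g \<otimes>\<^bsub>G\<^esub> h) x = f g (f h x)"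
    and one: "\<And>x. x \<in> E \<Longrightarrow> f \<one>\<^bsub>G\<^esub> x = x"
  shows "group_action G E (\<lambda>g. restrict (f g) E)"
proof -
  have cancel: "f (inv\<^bsub>G\<^esub> g) (f g x) = x" "f g (f (inv\<^bsub>G\<^esub> g) x) = x"
    if "g \<in> carrier G" "x \<in> E" for g x
    using that mult[of "inv\<^bsub>G\<^esub> g" g x] mult[of g "inv\<^bsub>G\<^esub> g" x] one
    by (simp_all add: G group.inv_closed group.l_inv group.r_inv)
  have Bij: "restrict (f g) E \<in> Bij E" if "g \<in> carrier G" for g
  proof -
    have "bij_betw (f g) E E"
      by (rule bij_betw_byWitness[where f' = "f (inv\<^bsub>G\<^esub> g)"])
        (use that cancel closed G group.inv_closed in auto)
    then show ?thesis
      unfolding Bij_def by (simp add: bij_betw_restrict_eq)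
  qed
  have "(\<lambda>g. restrict (f g) E) \<in> hom G (BijGroup E)"
  proof (rule homI)
    show "restrict (f g) E \<in> carrier (BijGroup E)" if "g \<in> carrier G" for g
      using Bij[OF that] by (simp add: BijGroup_def)
    show "restrict (f (g \<otimes>\<^bsub>G\<^esub> h)) E = restrict (f g) E \<otimes>\<^bsub>BijGroup E\<^esub> restrict (f h) E"
      if "g \<in> carrier G" "h \<in> carrier G" for g h
      using that Bij closed mult by (auto simp: BijGroup_def compose_def fun_eq_iff)
  qed
  then show ?thesis
    unfolding group_action_def group_hom_def group_hom_axioms_def
    using G group_BijGroup by blast
qed

lemma isometric_action_conj:
  assumes \<phi>: "isometric_action G n \<phi>" and f: "isometry_Rn n f"
  shows "isometric_action G n (\<lambda>g. restrict (f \<circ> \<phi> g \<circ> inv_into (Rn n) f) (Rn n))"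
proof -
  interpret group_action G "Rn n" \<phi>
    using \<phi> by (simp add: isometric_action_def)
  define f' where "f' = inv_into (Rn n) f"
  have bij: "bij_betw f (Rn n) (Rn n)"
    and iso: "\<And>x y. x \<in> Rn n \<Longrightarrow> y \<in> Rn n \<Longrightarrow> edist n (f x) (f y) = edist n x y"
    using f by (simp_all add: isometry_Rn_def)
  have f': "f' y \<in> Rn n" "f (f' y) = y" if "y \<in> Rn n" for y
    using that bij bij_betw_inv_into[OF bij] bij_betw_apply bij_betw_inv_into_right
    by (fastforce simp: f'_def)+
  have f_in: "f x \<in> Rn n" and f'_f: "f' (f x) = x" if "x \<in> Rn n" for x
    using that bij by (simp_all add: f'_def bij_betw_apply bij_betw_inv_into_left)
  have \<phi>_in: "\<phi> g x \<in> Rn n" if "g \<in> carrier G" "x \<in> Rn n" for g x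
    using that element_image by blast
  have G: "group G"
    using group_hom group_hom.axioms(1) by blast
  have "group_action G (Rn n) (\<lambda>g. restrict (f \<circ> \<phi> g \<circ> f') (Rn n))"
  proof (rule group_actionI[OF G])
    show "(f \<circ> \<phi> g \<circ> f') x \<in> Rn n" if "g \<in> carrier G" "x \<in> Rn n" for g x
      using that f' f_in \<phi>_in by simp
    show "(f \<circ> \<phi> (g \<otimes>\<^bsub>G\<^esub> h) \<circ> f') x = (f \<circ> \<phi> g \<circ> f') ((f \<circ> \<phi> h \<circ> f') x)"
      if "g \<in> carrier G" "h \<in> carrier G" "x \<in> Rn n" for g h x
      using that f' f'_f \<phi>_in composition_rule by simp
    show "(f \<circ> \<phi> \<one>\<^bsub>G\<^esub> \<circ> f') x = x" if "x \<in> Rn n" for x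
      using that f' id_eq_one[symmetric] by simp
  qed
  moreover have "edist n ((f \<circ> \<phi> g \<circ> f') x) ((f \<circ> \<phi> g \<circ> f') y) = edist n x y"
    if "g \<in> carrier G" "x \<in> Rn n" "y \<in> Rn n" for g x y
    using that f' iso \<phi>_in \<phi> unfolding isometric_action_def
    by (metis comp_apply)
  ultimately show ?thesis
    by (simp add: isometric_action_def f'_def)
qed

lemma sub_p_toral_isometric_image:
  fixes G :: "(nat \<Rightarrow> int) monoid"
  assumes "p_torus G p" "isometric_action G n \<phi>" "k \<le> n"
    and f: "isometry_Rn n f" and x: "x \<in> Rn n" and X: "X \<subseteq> f ` orbit G \<phi> x"
  shows "sub_p_toral p k X"
proof -
  define \<psi> where "\<psi> = (\<lambda>g. restrict (f \<circ> \<phi> g \<circ> inv_into (Rn n) f) (Rn n))"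
  have "bij_betw f (Rn n) (Rn n)"
    using f by (simp add: isometry_Rn_def)
  then have fx: "f x \<in> Rn n" and "inv_into (Rn n) f (f x) = x"
    using x by (simp_all add: bij_betw_apply bij_betw_inv_into_left)
  then have "\<psi> g (f x) = f (\<phi> g x)" for g
    by (simp add: \<psi>_def)
  then have "X \<subseteq> orbit G \<psi> (f x)"
    using X by (auto simp: orbit_def)
  then show ?thesis
    unfolding sub_p_toral_def
    using assms(1-3) isometric_action_conj[OF assms(2) f] fx by (auto simp: \<psi>_def)
qed

definition rot :: "nat \<Rightarrow> (nat \<Rightarrow> real) \<Rightarrow> (nat \<Rightarrow> real) \<Rightarrow> (nat \<Rightarrow> real)" where
  "rot d t z = (\<lambda>i.
     if i = d then cos (t 0) * z d - sin (t 0) * z (d+1)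
     else if i = d+1 then sin (t 0) * z d + cos (t 0) * z (d+1)
     else if i = d+2 then cos (t 1) * z (d+2) - sin (t 1) * z (d+3)
     else if i = d+3 then sin (t 1) * z (d+2) + cos (t 1) * z (d+3)
     else if i = d+4 then cos (t 2) * z (d+4) - sin (t 2) * z (d+5)
     else if i = d+5 then sin (t 2) * z (d+4) + cos (t 2) * z (d+5)
     else z i)"

lemma rot_rot: "rot d t (rot d s z) = rot d (\<lambda>j. t j + s j) z"
  unfolding rot_def by (rule ext) (simp add: cos_add sin_add algebra_simps)

lemma rot_cong:
  assumes "\<And>j. j < 3 \<Longrightarrow> cos (t j) = cos (s j) \<and> sin (t j) = sin (s j)"
  shows "rot d t = rot d s"
proof -
  have "cos (t 0) = cos (s 0)" "sin (t 0) = sin (s 0)" "cos (t 1) = cos (s 1)" "sin (t 1) = sin (s 1)"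
    "cos (t 2) = cos (s 2)" "sin (t 2) = sin (s 2)"
    using assms[of 0] assms[of 1] assms[of 2] by simp_all
  then show ?thesis
    unfolding rot_def by presburger
qed

lemma rot_zero: "rot d (\<lambda>_. 0) z = z"
  unfolding rot_def by (rule ext) simp

lemma rot_Rn: "z \<in> Rn (d+6) \<Longrightarrow> rot d t z \<in> Rn (d+6)"
  unfolding rot_def Rn_def by auto

lemma sum_lessThan_add6:
  fixes d :: nat
  shows "(\<Sum>i<d+6. f i) = (\<Sum>i<d. f i) + f d + f (d+1) + f (d+2) + f (d+3) + f (d+4) + f (d+5)"
  by (simp add: numeral_eq_Suc add.assoc)

lemma edist_rot: "edist (d+6) (rot d t x) (rot d t y) = edist (d+6) x y"
proof -
  have plane: "(c * x1 - s * x2 - (c * y1 - s * y2))\<^sup>2 + (s * x1 + c * x2 - (s * y1 + c * y2))\<^sup>2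
      = (x1 - y1)\<^sup>2 + (x2 - y2)\<^sup>2" if "s\<^sup>2 + c\<^sup>2 = 1" for c s x1 x2 y1 y2 :: real
  proof -
    have "(c * x1 - s * x2 - (c * y1 - s * y2))\<^sup>2 + (s * x1 + c * x2 - (s * y1 + c * y2))\<^sup>2
        = (s\<^sup>2 + c\<^sup>2) * ((x1 - y1)\<^sup>2 + (x2 - y2)\<^sup>2)"
      by (simp add: power2_eq_square algebra_simps)
    with that show ?thesis by simp
  qed
  have "(\<Sum>i<d. (rot d t x i - rot d t y i)\<^sup>2) = (\<Sum>i<d. (x i - y i)\<^sup>2)"
    by (rule sum.cong) (auto simp: rot_def)
  then show ?thesis
    unfolding edist_def sum_lessThan_add6 by (simp add: rot_def plane add.assoc)
qed

(* chord_dot x y is the inner product of the chords from (1, 0) to (cos x, sin x) and to (cos y, sin y). *)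
definition chord_dot :: "real \<Rightarrow> real \<Rightarrow> real" where
  "chord_dot x y = (cos x - 1) * (cos y - 1) + sin x * sin y"

lemma chord_dot_commute: "chord_dot x y = chord_dot y x"
  unfolding chord_dot_def by (simp add: mult.commute)

lemma chord_dot_0: "chord_dot x 0 = 0" "chord_dot 0 x = 0"
  unfolding chord_dot_def by simp_all

lemma dot_rot_displacements:
  fixes d :: nat and r0 r1 r2 :: real and t s :: "nat \<Rightarrow> real"
  defines "x0 \<equiv> (\<lambda>i. if i = d then r0 else if i = d+2 then r1 else if i = d+4 then r2 else 0)"
  shows "dot (d+6) (rot d t x0 - x0) (rot d s x0 - x0)
    = r0\<^sup>2 * chord_dot (t 0) (s 0) + r1\<^sup>2 * chord_dot (t 1) (s 1) + r2\<^sup>2 * chord_dot (t 2) (s 2)"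
proof -
  have "(\<Sum>i<d. (rot d t x0 i - x0 i) * (rot d s x0 i - x0 i)) = 0"
    by (rule sum.neutral) (auto simp: rot_def x0_def)
  then show ?thesis
    unfolding dot_def sum_lessThan_add6
    by (simp add: rot_def x0_def chord_dot_def power2_eq_square algebra_simps)
qed

definition torus3 :: "nat \<Rightarrow> (nat \<Rightarrow> int) monoid" where
  "torus3 p = product_group {..<3} (\<lambda>_. integer_mod_group p)"

lemma p_torus_torus3: "p_torus (torus3 p) p"
  unfolding p_torus_def torus3_def by (auto intro!: exI[of _ 3])

definition torus_angles :: "nat \<Rightarrow> (nat \<Rightarrow> int) \<Rightarrow> nat \<Rightarrow> real" where
  "torus_angles p g = (\<lambda>j. 2 * pi * of_int (g j) / real p)"

lemma cos_sin_mod_period: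
  assumes "p > 0"
  shows "cos (2 * pi * of_int (e mod int p) / real p) = cos (2 * pi * of_int e / real p)"
    and "sin (2 * pi * of_int (e mod int p) / real p) = sin (2 * pi * of_int e / real p)"
proof -
  have "real_of_int (e mod int p) = of_int e - real p * of_int (e div int p)"
    by (simp add: minus_div_mult_eq_mod[symmetric] algebra_simps)
  then have "2 * pi * of_int (e mod int p) / real p = 2 * pi * of_int e / real p - 2 * pi * of_int (e div int p)"
    using assms by (simp only:) (simp add: field_simps)
  then show "cos (2 * pi * of_int (e mod int p) / real p) = cos (2 * pi * of_int e / real p)"
    and "sin (2 * pi * of_int (e mod int p) / real p) = sin (2 * pi * of_int e / real p)"
    by (simp_all add: cos_diff sin_diff)
qed

lemma rot_torus_element:
  assumes "p > 0"
  shows "rot d (torus_angles p (\<lambda>j\<in>{..<3}. e j mod int p)) = rot d (\<lambda>j. 2 * pi * of_int (e j) / real p)"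
  by (rule rot_cong) (simp add: torus_angles_def cos_sin_mod_period[OF assms])

definition rot_action :: "nat \<Rightarrow> nat \<Rightarrow> (nat \<Rightarrow> int) \<Rightarrow> (nat \<Rightarrow> real) \<Rightarrow> (nat \<Rightarrow> real)" where
  "rot_action p d g = restrict (rot d (torus_angles p g)) (Rn (d+6))"

lemma isometric_action_rot_action:
  assumes "p > 0"
  shows "isometric_action (torus3 p) (d+6) (rot_action p d)"
proof -
  have "group_action (torus3 p) (Rn (d+6)) (rot_action p d)"
    unfolding rot_action_def
  proof (rule group_actionI)
    show "group (torus3 p)"
      by (simp add: torus3_def)
    show "rot d (torus_angles p g) x \<in> Rn (d+6)" if "x \<in> Rn (d+6)" for g x
      using that by (rule rot_Rn)
    show "rot d (torus_angles p \<one>\<^bsub>torus3 p\<^esub>) x = x" for x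
    proof -
      have "rot d (torus_angles p \<one>\<^bsub>torus3 p\<^esub>) = rot d (\<lambda>_. 0)"
        by (rule rot_cong) (simp add: torus3_def torus_angles_def)
      then show ?thesis by (simp add: rot_zero)
    qed
    show "rot d (torus_angles p (g \<otimes>\<^bsub>torus3 p\<^esub> h)) x = rot d (torus_angles p g) (rot d (torus_angles p h) x)"
      if "g \<in> carrier (torus3 p)" "h \<in> carrier (torus3 p)" for g h x
    proof -
      have "rot d (torus_angles p (g \<otimes>\<^bsub>torus3 p\<^esub> h)) = rot d (\<lambda>j. torus_angles p g j + torus_angles p h j)"
        by (rule rot_cong)
          (simp add: torus3_def torus_angles_def cos_sin_mod_period[OF assms] add_divide_distrib distrib_left)
      then show ?thesis by (simp add: rot_rot)
    qed
  qed
  then show ?thesis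
    unfolding isometric_action_def by (simp add: rot_action_def edist_rot rot_Rn)
qed

lemma tendsto_chord_dot: "((\<lambda>t. chord_dot (a * t) (b * t) / t\<^sup>2) \<longlongrightarrow> a * b) (at_right 0)"
  unfolding chord_dot_def by real_asymp

lemma tendsto_chord_dot_ratio:
  assumes "a \<noteq> 0" "b \<noteq> 0"
  shows "((\<lambda>t. chord_dot (a * t) (a * t) / chord_dot (a * t) (b * t)) \<longlongrightarrow> a / b) (at_right 0)"
proof -
  have "((\<lambda>t. (chord_dot (a * t) (a * t) / t\<^sup>2) / (chord_dot (a * t) (b * t) / t\<^sup>2)) \<longlongrightarrow> (a * a) / (a * b))
      (at_right 0)"
    using assms by (intro tendsto_divide tendsto_chord_dot) simp
  moreover have "(a * a) / (a * b) = a / b"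
    using assms(1) by simp
  moreover have "\<forall>\<^sub>F t in at_right 0. (chord_dot (a * t) (a * t) / t\<^sup>2) / (chord_dot (a * t) (b * t) / t\<^sup>2)
      = chord_dot (a * t) (a * t) / chord_dot (a * t) (b * t)"
    using eventually_at_right_less[of "0::real"]
    by eventually_elim (simp add: divide_divide_eq_left divide_divide_eq_right)
  ultimately show ?thesis
    by (auto intro: Lim_transform_eventually)
qed

lemma exists_ratio_between:
  fixes A B g :: real
  assumes "0 \<le> A" "0 \<le> B" "g\<^sup>2 < A * B"
  obtains k m :: nat where "0 < k" "0 < m" "\<bar>g\<bar> * k < A * m" "\<bar>g\<bar> * m < B * k"
proof -
  have "0 < A * B"
    using assms(3) by (smt (verit) zero_le_power2)
  then have A: "0 < A" and B: "0 < B"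
    using assms(1,2) by (auto simp: zero_less_mult_iff)
  show ?thesis
  proof (cases "g = 0")
    case True
    with A B show ?thesis
      by (intro that[of 1 1]) simp_all
  next
    case False
    then have "\<bar>g\<bar> / B < A / \<bar>g\<bar>"
      using A B assms(3) by (simp add: field_simps power2_eq_square abs_mult_self_eq flip: abs_mult)
    then obtain r where r: "r \<in> \<rat>" "\<bar>g\<bar> / B < r" "r < A / \<bar>g\<bar>"
      using Rats_dense_in_real by blast
    have "0 < r"
      using r(2) B False by (smt (verit) divide_pos_pos zero_less_abs_iff)
    from r(1) obtain k m :: nat where "m \<noteq> 0" "\<bar>r\<bar> = real k / real m"
      by (rule Rats_abs_nat_div_natE)
    with \<open>0 < r\<close> have km: "r = real k / real m" "0 < m" "0 < k"
      by (auto simp: zero_less_divide_iff)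
    show ?thesis
    proof (rule that[of k m])
      show "\<bar>g\<bar> * real k < A * real m" "\<bar>g\<bar> * real m < B * real k"
        using r(2,3) km B False by (simp_all add: field_simps)
    qed (use km in auto)
  qed
qed

(* (A, g; g, B) is the Gram matrix of the displacements of a point with radii r0, r1, r2 in the
   three planes under the rotations by the angles (t, 0, e1 t) and (0, t, e2 t). *)
definition chord_gram :: "real \<Rightarrow> int \<Rightarrow> int \<Rightarrow> real \<Rightarrow> real \<Rightarrow> real \<Rightarrow> bool" where
  "chord_gram t e1 e2 A B g \<longleftrightarrow> (\<exists>r0 r1 r2.
     r0\<^sup>2 * chord_dot t t + r2\<^sup>2 * chord_dot (e1 * t) (e1 * t) = A \<and>
     r1\<^sup>2 * chord_dot t t + r2\<^sup>2 * chord_dot (e2 * t) (e2 * t) = B \<and>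
     r2\<^sup>2 * chord_dot (e1 * t) (e2 * t) = g)"

lemma chord_gramI:
  fixes t A B g :: real and e1 e2 :: int
  defines "c \<equiv> chord_dot (e1 * t) (e2 * t)"
  assumes "0 < chord_dot t t" "c \<noteq> 0" "0 \<le> g / c"
    and "g * (chord_dot (e1 * t) (e1 * t) / c) \<le> A" "g * (chord_dot (e2 * t) (e2 * t) / c) \<le> B"
  shows "chord_gram t e1 e2 A B g"
  unfolding chord_gram_def
proof (intro exI conjI)
  define s where "s = g / c"
  have "s * chord_dot (e1 * t) (e1 * t) \<le> A" "s * chord_dot (e2 * t) (e2 * t) \<le> B" "0 \<le> s"
    using assms(4-6) by (simp_all add: s_def)
  with assms(2,3) show "(sqrt ((A - s * chord_dot (e1 * t) (e1 * t)) / chord_dot t t))\<^sup>2 * chord_dot t t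
      + (sqrt s)\<^sup>2 * chord_dot (e1 * t) (e1 * t) = A"
    "(sqrt ((B - s * chord_dot (e2 * t) (e2 * t)) / chord_dot t t))\<^sup>2 * chord_dot t t
      + (sqrt s)\<^sup>2 * chord_dot (e2 * t) (e2 * t) = B"
    "(sqrt s)\<^sup>2 * chord_dot (e1 * t) (e2 * t) = g"
    by (simp_all add: s_def c_def)
qed

lemma chord_gram_small_angles:
  fixes A B g :: real
  assumes "0 \<le> A" "0 \<le> B" "g\<^sup>2 < A * B"
  obtains e1 e2 :: int where "\<forall>\<^sub>F t in at_right 0. chord_gram t e1 e2 A B g"
proof -
  obtain k m :: nat where km: "0 < k" "0 < m" "\<bar>g\<bar> * k < A * m" "\<bar>g\<bar> * m < B * k"
    using exists_ratio_between[OF assms] .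
  \<comment> \<open>e2 has the sign of g, so that g / chord_dot (e1 * t) (e2 * t) is eventually nonnegative.\<close>
  define \<sigma> :: real where "\<sigma> = (if g < 0 then -1 else 1)"
  define e1 e2 :: int where "e1 = int k" and "e2 = (if g < 0 then - int m else int m)"
  define a b where "a = real_of_int e1" and "b = real_of_int e2"
  have ab: "\<sigma> * (a * b) = real k * real m" "g * (a / b) = \<bar>g\<bar> * k / m" "g * (b / a) = \<bar>g\<bar> * m / k"
    by (simp_all add: a_def b_def e1_def e2_def \<sigma>_def)
  have pos: "0 < \<sigma> * (a * b)" and ltA: "g * (a / b) < A" and ltB: "g * (b / a) < B"
    using km by (simp_all only: ab) (simp_all add: field_simps)
  have "a \<noteq> 0" "b \<noteq> 0"
    using km by (simp_all add: a_def b_def e1_def e2_def)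
  have L1: "((\<lambda>t. chord_dot t t / t\<^sup>2) \<longlongrightarrow> 1) (at_right 0)"
    using tendsto_chord_dot[of 1 1] by simp
  have L2: "((\<lambda>t. \<sigma> * (chord_dot (a * t) (b * t) / t\<^sup>2)) \<longlongrightarrow> \<sigma> * (a * b)) (at_right 0)"
    by (intro tendsto_mult_left tendsto_chord_dot)
  have L3: "((\<lambda>t. g * (chord_dot (a * t) (a * t) / chord_dot (a * t) (b * t))) \<longlongrightarrow> g * (a / b)) (at_right 0)"
    and L4: "((\<lambda>t. g * (chord_dot (b * t) (b * t) / chord_dot (b * t) (a * t))) \<longlongrightarrow> g * (b / a)) (at_right 0)"
    by (intro tendsto_mult_left tendsto_chord_dot_ratio \<open>a \<noteq> 0\<close> \<open>b \<noteq> 0\<close>)+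
  have "\<forall>\<^sub>F t in at_right 0. chord_gram t e1 e2 A B g"
    using order_tendstoD(1)[OF L1 zero_less_one] order_tendstoD(1)[OF L2 pos]
      order_tendstoD(2)[OF L3 ltA] order_tendstoD(2)[OF L4 ltB]
  proof eventually_elim
    case (elim t)
    define c where "c = chord_dot (a * t) (b * t)"
    have "0 < chord_dot t t" "0 < \<sigma> * c"
      using elim(1,2) by (simp_all add: c_def zero_less_divide_iff)
    moreover have "chord_dot (b * t) (a * t) = c"
      by (simp add: c_def chord_dot_commute)
    ultimately show ?case
      using elim(3,4) unfolding c_def a_def b_def
      by (intro chord_gramI) (auto simp: \<sigma>_def zero_le_divide_iff split: if_splits)
  qed
  then show ?thesis ..
qed

lemma torus3_orbit_triangle:
  fixes k p :: nat and e1 e2 :: int and A B g :: real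
  assumes p: "0 < p" and "chord_gram (2 * pi / real p) e1 e2 A B g"
  obtains x0 y z where "x0 \<in> Rn (k+6)" "y \<in> Rn (k+6)" "z \<in> Rn (k+6)"
    "{x0, y, z} \<subseteq> orbit (torus3 p) (rot_action p k) x0"
    "dot (k+6) (y - x0) (y - x0) = A" "dot (k+6) (z - x0) (z - x0) = B" "dot (k+6) (y - x0) (z - x0) = g"
proof -
  define \<theta> where "\<theta> = 2 * pi / real p"
  obtain r0 r1 r2 where
    gram: "r0\<^sup>2 * chord_dot \<theta> \<theta> + r2\<^sup>2 * chord_dot (e1 * \<theta>) (e1 * \<theta>) = A"
      "r1\<^sup>2 * chord_dot \<theta> \<theta> + r2\<^sup>2 * chord_dot (e2 * \<theta>) (e2 * \<theta>) = B"
      "r2\<^sup>2 * chord_dot (e1 * \<theta>) (e2 * \<theta>) = g"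
    using assms(2) unfolding chord_gram_def \<theta>_def by blast
  define x0 where "x0 = (\<lambda>i. if i = k then r0 else if i = k+2 then r1 else if i = k+4 then r2 else 0)"
  define g1 g2 where "g1 = (\<lambda>j\<in>{..<3}. [1, 0, e1] ! j mod int p)"
    and "g2 = (\<lambda>j\<in>{..<3}. [0, 1, e2] ! j mod int p)"
  define t1 t2 where "t1 = (\<lambda>j. 2 * pi * of_int ([1, 0, e1] ! j) / real p)"
    and "t2 = (\<lambda>j. 2 * pi * of_int ([0, 1, e2] ! j) / real p)"
  have x0: "x0 \<in> Rn (k+6)"
    by (simp add: x0_def Rn_def)
  have g: "g1 \<in> carrier (torus3 p)" "g2 \<in> carrier (torus3 p)"
    using p by (auto simp: g1_def g2_def torus3_def carrier_integer_mod_group)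
  interpret group_action "torus3 p" "Rn (k+6)" "rot_action p k"
    using isometric_action_rot_action[OF p] by (simp add: isometric_action_def)
  have "rot_action p k g1 x0 = rot k t1 x0" "rot_action p k g2 x0 = rot k t2 x0"
    using x0 rot_torus_element[OF p] by (simp_all add: rot_action_def g1_def g2_def t1_def t2_def)
  then have "rot k t1 x0 \<in> orbit (torus3 p) (rot_action p k) x0"
    "rot k t2 x0 \<in> orbit (torus3 p) (rot_action p k) x0"
    using g unfolding orbit_def by (metis (mono_tags, lifting) mem_Collect_eq)+
  then have orbit: "{x0, rot k t1 x0, rot k t2 x0} \<subseteq> orbit (torus3 p) (rot_action p k) x0"
    using orbit_refl[OF x0] by blast
  have "t1 0 = \<theta>" "t1 (Suc 0) = 0" "t1 2 = e1 * \<theta>" "t2 0 = 0" "t2 (Suc 0) = \<theta>" "t2 2 = e2 * \<theta>"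
    by (simp_all add: t1_def t2_def \<theta>_def)
  then have "dot (k+6) (rot k t1 x0 - x0) (rot k t1 x0 - x0) = A"
    "dot (k+6) (rot k t2 x0 - x0) (rot k t2 x0 - x0) = B"
    "dot (k+6) (rot k t1 x0 - x0) (rot k t2 x0 - x0) = g"
    unfolding x0_def dot_rot_displacements using gram by (simp_all add: chord_dot_0)
  then show ?thesis
    by (rule that[OF x0 rot_Rn[OF x0] rot_Rn[OF x0] orbit])
qed

lemma sub_p_toral_of_chord_gram:
  fixes k p :: nat and a b c :: "nat \<Rightarrow> real" and e1 e2 :: int
  assumes p: "0 < p" and abc: "a \<in> Rn k" "b \<in> Rn k" "c \<in> Rn k"
    and "chord_gram (2 * pi / real p) e1 e2
           (dot (k+6) (b - a) (b - a)) (dot (k+6) (c - a) (c - a)) (dot (k+6) (b - a) (c - a))"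
  shows "sub_p_toral p k {a, b, c}"
proof -
  obtain x0 y z where x0: "x0 \<in> Rn (k+6)" and yz: "y \<in> Rn (k+6)" "z \<in> Rn (k+6)"
    and orbit: "{x0, y, z} \<subseteq> orbit (torus3 p) (rot_action p k) x0"
    and gram: "dot (k+6) (y - x0) (y - x0) = dot (k+6) (b - a) (b - a)"
      "dot (k+6) (z - x0) (z - x0) = dot (k+6) (c - a) (c - a)"
      "dot (k+6) (y - x0) (z - x0) = dot (k+6) (b - a) (c - a)"
    using torus3_orbit_triangle[OF p assms(5)] by blast
  have abc': "a \<in> Rn (k+6)" "b \<in> Rn (k+6)" "c \<in> Rn (k+6)"
    using abc by (simp_all add: Rn_mono)
  obtain f where f: "isometry_Rn (k+6) f" "f x0 = a" "f y = b" "f z = c"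
    by (rule congruent_triangles_isometry[OF abc' x0 yz gram])
  have "{a, b, c} \<subseteq> f ` orbit (torus3 p) (rot_action p k) x0"
    using orbit by (auto simp flip: f(2-4))
  then show ?thesis
    by (rule sub_p_toral_isometric_image[OF p_torus_torus3 isometric_action_rot_action[OF p] le_add1 f(1) x0])
qed

theorem theorem4:
  fixes k :: nat and a b c :: "nat \<Rightarrow> real"
  assumes "a \<in> Rn k" "b \<in> Rn k" "c \<in> Rn k"
    and "\<not> collinear_pts {a, b, c}"
  shows "\<exists>p0::nat. \<forall>p::nat. prime p \<and> p \<ge> p0 \<longrightarrow> sub_p_toral p k {a, b, c}"
proof -
  have "(dot (k+6) (b - a) (c - a))\<^sup>2 < dot (k+6) (b - a) (b - a) * dot (k+6) (c - a) (c - a)"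
    using assms by (intro dot_square_less_if_not_collinear) (simp_all add: Rn_mono)
  from chord_gram_small_angles[OF dot_self_nonneg dot_self_nonneg this]
  obtain e1 e2 where "\<forall>\<^sub>F t in at_right 0. chord_gram t e1 e2
      (dot (k+6) (b - a) (b - a)) (dot (k+6) (c - a) (c - a)) (dot (k+6) (b - a) (c - a))" .
  moreover have "filterlim (\<lambda>p::nat. 2 * pi / real p) (at_right 0) sequentially"
    by real_asymp
  ultimately have "\<forall>\<^sub>F p in sequentially. chord_gram (2 * pi / real p) e1 e2
      (dot (k+6) (b - a) (b - a)) (dot (k+6) (c - a) (c - a)) (dot (k+6) (b - a) (c - a))"
    by (rule eventually_compose_filterlim)
  then obtain p0 where "\<forall>p\<ge>p0. chord_gram (2 * pi / real p) e1 e2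
      (dot (k+6) (b - a) (b - a)) (dot (k+6) (c - a) (c - a)) (dot (k+6) (b - a) (c - a))"
    unfolding eventually_sequentially by blast
  then have "sub_p_toral p k {a, b, c}" if "prime p" "p0 \<le> p" for p
    using that assms(1-3) by (intro sub_p_toral_of_chord_gram[of p a k b c e1 e2])
      (simp_all add: prime_gt_0_nat)
  then show ?thesis
    by blast
qed

end
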